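(* Let $\mathcal A$ be an ordered normed algebra with unit $e$ whose algebra cone $\mathcal A^+$ is normal. Let $a,b\in\mathcal A$ satisfy $ab-ba\geq e$. Then $a$ is neither positive nor negative, and $b$ is neither positive nor negative; that is, $a\notin \mathcal A^+$, $a\notin -\mathcal A^+$, $b\notin\mathcal A^+$ and $b\notin -\mathcal A^+$.
   Context: A normed algebra $\mathcal A$ (real or complex, with submultiplicative norm) with unit $e$. A cone is a nonempty subset $\mathcal A^+\subseteq\mathcal A$ with $\mathcal A^++\mathcal A^+\subseteq\mathcal A^+$, $\lambda\mathcal A^+\subseteq\mathcal A^+$ for all $\lambda\geq 0$, and $\mathcal A^+\cap(-\mathcal A^+)=\{0\}$; it induces the partial order $a\leq b \iff b-a\in\mathcal A^+$. Elements of $\mathcal A^+$ are called positive, elements of $-\mathcal A^+$ negative. The cone is an algebra cone if $\mathcal A^+\cdot\mathcal A^+\subseteq\mathcal A^+$ and $e\in\mathcal A^+$; then $\mathcal A$ is called an ordered normed algebra. The cone is normal if there is a constant $\alpha>0$ (necessarily $\alpha\ge1$, called the normality constant) such that $0\leq x\leq y$ implies $\|x\|\leq\alpha\|y\|$. *)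

theory Defs
  imports Complex_Main
begin

text \<open>A cone in a real vector space (complex algebras are real vector spaces via scaleR).\<close>
definition ord_cone :: "'a::real_vector set \<Rightarrow> bool" where
  "ord_cone C \<longleftrightarrow> C \<noteq> {} \<and> (\<forall>x\<in>C. \<forall>y\<in>C. x + y \<in> C)
     \<and> (\<forall>t::real. t \<ge> 0 \<longrightarrow> (\<forall>x\<in>C. t *\<^sub>R x \<in> C))
     \<and> C \<inter> uminus ` C = {0}"

definition algebra_cone :: "'a::{real_algebra, ring_1} set \<Rightarrow> bool" where
  "algebra_cone C \<longleftrightarrow> ord_cone C \<and> (\<forall>x\<in>C. \<forall>y\<in>C. x * y \<in> C) \<and> 1 \<in> C"

definition cone_le :: "'a::real_vector set \<Rightarrow> 'a \<Rightarrow> 'a \<Rightarrow> bool" where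
  "cone_le C x y \<longleftrightarrow> y - x \<in> C"

definition normal_cone :: "'a::real_normed_vector set \<Rightarrow> bool" where
  "normal_cone C \<longleftrightarrow> (\<exists>\<alpha>>0. \<forall>x y. cone_le C 0 x \<and> cone_le C x y \<longrightarrow> norm x \<le> \<alpha> * norm y)"

end

theory Submission
  imports Defs
begin

text \<open>Suppose \<open>x \<ge> 0\<close> and \<open>xy - yx \<ge> 1\<close>. Multiplying by powers of \<open>x\<close> and adding gives
  \<open>x\<^sup>n\<^sup>+\<^sup>1y - yx\<^sup>n\<^sup>+\<^sup>1 \<ge> (n+1) x\<^sup>n \<ge> 0\<close>, so by normality
  \<open>(n+1) \<parallel>x\<^sup>n\<parallel> \<le> 2\<alpha> \<parallel>y\<parallel> \<parallel>x\<^sup>n\<^sup>+\<^sup>1\<parallel> \<le> 2\<alpha> \<parallel>y\<parallel> \<parallel>x\<parallel> \<parallel>x\<^sup>n\<parallel>\<close>.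
  For large \<open>n\<close> this forces \<open>x\<^sup>n = 0\<close>, and the first inequality then propagates
  \<open>x\<^sup>n\<^sup>+\<^sup>1 = 0 \<Longrightarrow> x\<^sup>n = 0\<close> down to \<open>1 = x\<^sup>0 = 0\<close>. The other three cases follow by
  replacing \<open>(a, b)\<close> with \<open>(-a, -b)\<close>, \<open>(b, -a)\<close> or \<open>(-b, a)\<close>, which have the same commutator.\<close>

lemma algebra_cone_add: "algebra_cone C \<Longrightarrow> x \<in> C \<Longrightarrow> y \<in> C \<Longrightarrow> x + y \<in> C"
  unfolding algebra_cone_def ord_cone_def by blast

lemma algebra_cone_scaleR: "algebra_cone C \<Longrightarrow> 0 \<le> t \<Longrightarrow> x \<in> C \<Longrightarrow> t *\<^sub>R x \<in> C"
  unfolding algebra_cone_def ord_cone_def by blast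

lemma algebra_cone_mult: "algebra_cone C \<Longrightarrow> x \<in> C \<Longrightarrow> y \<in> C \<Longrightarrow> x * y \<in> C"
  unfolding algebra_cone_def by blast

lemma algebra_cone_power: "algebra_cone C \<Longrightarrow> x \<in> C \<Longrightarrow> x ^ n \<in> C"
  by (induction n) (auto simp: algebra_cone_def intro: algebra_cone_mult)

lemma algebra_cone_commutator_power_ge:
  fixes C :: "'a::{real_algebra, ring_1} set"
  assumes C: "algebra_cone C" and x: "x \<in> C" and xy: "cone_le C 1 (x * y - y * x)"
  shows "cone_le C (real (Suc n) *\<^sub>R x ^ n) (x ^ Suc n * y - y * x ^ Suc n)"
  unfolding cone_le_def
proof (induction n)
  case 0
  then show ?case using xy by (simp add: cone_le_def)
next
  case (Suc n)
  have "x ^ Suc (Suc n) * y - y * x ^ Suc (Suc n) - real (Suc (Suc n)) *\<^sub>R x ^ Suc n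
      = x * (x ^ Suc n * y - y * x ^ Suc n - real (Suc n) *\<^sub>R x ^ n)
        + (x * y - y * x - 1) * x ^ Suc n"
    by (simp add: algebra_simps scaleR_add_left scaleR_2)
  also have "\<dots> \<in> C"
    using Suc xy unfolding cone_le_def
    by (intro algebra_cone_add algebra_cone_mult algebra_cone_power C x)
  finally show ?case .
qed

lemma norm_commutator_le:
  fixes x y :: "'a::real_normed_algebra"
  shows "norm (x * y - y * x) \<le> 2 * norm x * norm y"
proof -
  have "norm (x * y - y * x) \<le> norm (x * y) + norm (y * x)"
    by (rule norm_triangle_ineq4)
  also have "\<dots> \<le> norm x * norm y + norm y * norm x"
    by (intro add_mono norm_mult_ineq)
  finally show ?thesis by simp
qed

lemma power_neq_zero_if_descending:
  fixes x :: "'a::ring_1"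
  assumes "\<And>n. x ^ Suc n = 0 \<Longrightarrow> x ^ n = 0"
  shows "x ^ n \<noteq> 0"
  using assms by (induction n) auto

lemma positive_imp_commutator_not_ge_one:
  fixes C :: "'a::{real_normed_algebra, ring_1} set"
  assumes C: "algebra_cone C" and normal: "normal_cone C"
    and x: "x \<in> C" and xy: "cone_le C 1 (x * y - y * x)"
  shows False
proof -
  obtain \<alpha> where "\<alpha> > 0"
    and \<alpha>: "\<And>u v. cone_le C 0 u \<and> cone_le C u v \<Longrightarrow> norm u \<le> \<alpha> * norm v"
    using normal unfolding normal_cone_def by blast
  define c where "c = 2 * \<alpha> * norm y"
  have growth: "real (Suc n) * norm (x ^ n) \<le> c * norm (x ^ Suc n)" for n
  proof -
    have "cone_le C 0 (real (Suc n) *\<^sub>R x ^ n)"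
      unfolding cone_le_def by (simp add: algebra_cone_scaleR algebra_cone_power C x)
    then have "norm (real (Suc n) *\<^sub>R x ^ n) \<le> \<alpha> * norm (x ^ Suc n * y - y * x ^ Suc n)"
      using \<alpha> algebra_cone_commutator_power_ge[OF C x xy] by blast
    also have "\<dots> \<le> \<alpha> * (2 * norm (x ^ Suc n) * norm y)"
      using \<open>\<alpha> > 0\<close> by (intro mult_left_mono norm_commutator_le) auto
    finally show ?thesis
      by (simp only: norm_scaleR abs_of_nat c_def mult_ac)
  qed
  have descending: "x ^ n = 0" if "x ^ Suc n = 0" for n
    using growth[of n] that by (simp add: mult_le_0_iff)
  have "c \<ge> 0"
    using \<open>\<alpha> > 0\<close> by (simp add: c_def)
  obtain n :: nat where n: "c * norm x < real (Suc n)"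
    using reals_Archimedean2 less_trans of_nat_less_iff lessI by meson
  have "real (Suc n) * norm (x ^ n) \<le> c * norm (x * x ^ n)"
    using growth[of n] by simp
  also have "\<dots> \<le> c * norm x * norm (x ^ n)"
    using \<open>c \<ge> 0\<close> norm_mult_ineq[of x "x ^ n"] by (simp add: mult.assoc mult_left_mono)
  finally have "x ^ n = 0"
    using n by (simp add: mult_le_cancel_right)
  with power_neq_zero_if_descending descending show False by blast
qed

theorem theorem2p1:
  fixes C :: "'a::{real_normed_algebra, ring_1} set" and a b :: 'a
  assumes "algebra_cone C" and "normal_cone C"
    and "cone_le C 1 (a * b - b * a)"
  shows "a \<notin> C \<and> a \<notin> uminus ` C \<and> b \<notin> C \<and> b \<notin> uminus ` C"
proof -
  note excluded = positive_imp_commutator_not_ge_one[OF assms(1,2)]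
  have "(-a) * (-b) - (-b) * (-a) = a * b - b * a"
    and "b * (-a) - (-a) * b = a * b - b * a"
    and "(-b) * a - a * (-b) = a * b - b * a"
    by (simp_all add: algebra_simps)
  then have "a \<notin> C" "-a \<notin> C" "b \<notin> C" "-b \<notin> C"
    using excluded assms(3) by metis+
  then show ?thesis by (auto simp: image_iff)
qed

end
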